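(* Let $\mathcal T$ be a closed triangulated surface and let $(\mathcal G,\mathcal D,\{\mathcal D_1,\ldots,\mathcal D_n\})$ be a decomposition of $\mathcal T$. Then the main disc $\mathcal D$ satisfies $T(\mathcal D)\geq \mathrm{mv}(\mathcal T)$ and $V(\mathcal D)\geq \mathrm{mv}(\mathcal T)+1$, where $T(\cdot)$ and $V(\cdot)$ denote the number of triangles and of vertices.
   Context: A triangulated surface is a finite simplicial complex whose underlying space is a connected compact surface; it is closed if the surface has empty boundary. The valence of a vertex is the number of triangles containing it, and $\mathrm{mv}(\mathcal T)$ is the maximal valence of a vertex of $\mathcal T$. A decomposition of a closed triangulated surface $\mathcal T$ is a triple $(\mathcal G,\mathcal D,\{\mathcal D_1,\ldots,\mathcal D_n\})$ with $n\geq 0$ such that: $\mathcal G,\mathcal D,\mathcal D_1,\ldots,\mathcal D_n$ are sub-triangulations (subcomplexes which are triangulated surfaces) of $\mathcal T$; $\mathcal D,\mathcal D_1,\ldots,\mathcal D_n$ are triangulated discs; the interior of $\mathcal D$ contains a vertex of maximal valence in $\mathcal T$; $\mathcal G\cup\mathcal D\cup\mathcal D_1\cup\cdots\cup\mathcal D_n=\mathcal T$; and the intersection of any two of these sub-triangulations is either a triangulated circle or empty. $\mathcal G$ is called the genus-surface and $\mathcal D$ the main disc. *)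

theory Defs
  imports Main
begin

definition simplicial_complex :: "'v set set \<Rightarrow> bool" where
  "simplicial_complex K \<longleftrightarrow> finite K \<and> (\<forall>s\<in>K. finite s \<and> s \<noteq> {}) \<and>
     (\<forall>s\<in>K. \<forall>t. t \<subseteq> s \<and> t \<noteq> {} \<longrightarrow> t \<in> K)"

definition vertices :: "'v set set \<Rightarrow> 'v set" where
  "vertices K = {v. {v} \<in> K}"

definition edges :: "'v set set \<Rightarrow> 'v set set" where
  "edges K = {s\<in>K. card s = 2}"

definition triangles :: "'v set set \<Rightarrow> 'v set set" where
  "triangles K = {s\<in>K. card s = 3}"

definition cx_connected :: "'v set set \<Rightarrow> bool" where
  "cx_connected K \<longleftrightarrow> (\<forall>u\<in>vertices K. \<forall>w\<in>vertices K.
      (u, w) \<in> {(a, b). {a, b} \<in> edges K}\<^sup>*)"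

definition degree :: "'v set set \<Rightarrow> 'v \<Rightarrow> nat" where
  "degree K v = card {e\<in>edges K. v \<in> e}"

definition tri_circle :: "'v set set \<Rightarrow> bool" where
  "tri_circle C \<longleftrightarrow> simplicial_complex C \<and> (\<forall>s\<in>C. card s \<le> 2) \<and>
     card (vertices C) \<ge> 3 \<and> cx_connected C \<and> (\<forall>v\<in>vertices C. degree C v = 2)"

text \<open>Triangulated arc: a path graph with at least one edge.\<close>
definition tri_arc :: "'v set set \<Rightarrow> bool" where
  "tri_arc C \<longleftrightarrow> simplicial_complex C \<and> (\<forall>s\<in>C. card s \<le> 2) \<and>
     edges C \<noteq> {} \<and> cx_connected C \<and> (\<forall>v\<in>vertices C. degree C v \<le> 2) \<and>
     card (edges C) + 1 = card (vertices C)"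

definition link :: "'v set set \<Rightarrow> 'v \<Rightarrow> 'v set set" where
  "link K v = {s - {v} | s. s \<in> K \<and> v \<in> s \<and> s \<noteq> {v}}"

definition tri_surface :: "'v set set \<Rightarrow> bool" where
  "tri_surface K \<longleftrightarrow> simplicial_complex K \<and> K \<noteq> {} \<and> (\<forall>s\<in>K. card s \<le> 3) \<and>
     (\<forall>s\<in>K. \<exists>t\<in>triangles K. s \<subseteq> t) \<and> cx_connected K \<and>
     (\<forall>v\<in>vertices K. tri_circle (link K v) \<or> tri_arc (link K v))"

definition interior_vertex :: "'v set set \<Rightarrow> 'v \<Rightarrow> bool" where
  "interior_vertex K v \<longleftrightarrow> v \<in> vertices K \<and> tri_circle (link K v)"

definition closed_surface :: "'v set set \<Rightarrow> bool" where
  "closed_surface K \<longleftrightarrow> tri_surface K \<and> (\<forall>v\<in>vertices K. interior_vertex K v)"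

definition euler_char :: "'v set set \<Rightarrow> int" where
  "euler_char K = int (card (vertices K)) - int (card (edges K)) + int (card (triangles K))"

text \<open>Triangulated disc: a triangulated surface with nonempty boundary and Euler
  characteristic 1 (by the classification of compact surfaces this is exactly a disc).\<close>
definition tri_disc :: "'v set set \<Rightarrow> bool" where
  "tri_disc K \<longleftrightarrow> tri_surface K \<and> (\<exists>v\<in>vertices K. \<not> interior_vertex K v) \<and> euler_char K = 1"

definition valence :: "'v set set \<Rightarrow> 'v \<Rightarrow> nat" where
  "valence K v = card {t\<in>triangles K. v \<in> t}"

definition mv :: "'v set set \<Rightarrow> nat" where
  "mv K = Max (valence K ` vertices K)"

definition sub_triangulation :: "'v set set \<Rightarrow> 'v set set \<Rightarrow> bool" where
  "sub_triangulation S K \<longleftrightarrow> S \<subseteq> K \<and> tri_surface S"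

definition decomposition :: "'v set set \<Rightarrow> 'v set set \<Rightarrow> 'v set set \<Rightarrow> 'v set set list \<Rightarrow> bool" where
  "decomposition T G D Ds \<longleftrightarrow>
     (\<forall>P\<in>set (G # D # Ds). sub_triangulation P T) \<and>
     (\<forall>P\<in>set (D # Ds). tri_disc P) \<and>
     (\<exists>v. interior_vertex D v \<and> valence T v = mv T) \<and>
     G \<union> D \<union> \<Union>(set Ds) = T \<and>
     (let Ps = G # D # Ds in \<forall>i j. i < j \<and> j < length Ps \<longrightarrow>
         tri_circle (Ps ! i \<inter> Ps ! j) \<or> Ps ! i \<inter> Ps ! j = {})"

end

theory Submission
  imports Defs
begin

text \<open>The triangles of a complex containing a vertex \<open>v\<close> correspond, via \<open>t \<mapsto> t - {v}\<close>,
  to the edges of the link of \<open>v\<close>. If \<open>v\<close> is interior in the main disc \<open>D \<subseteq> T\<close>, its link in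
  \<open>D\<close> is a circle contained in its link in \<open>T\<close>, which is also a circle; a circle contains
  no proper subcircle, so both links have the same edges and \<open>v\<close> has the same valence
  \<open>mv T\<close> in \<open>D\<close> as in \<open>T\<close>. That bounds the triangles of \<open>D\<close>; for the vertices, the link
  circle of \<open>v\<close> in \<open>D\<close> has as many vertices as edges, namely \<open>mv T\<close>, none equal to \<open>v\<close>.\<close>

lemma simplicial_complex_vertex_of_face:
  assumes "simplicial_complex K" "s \<in> K" "x \<in> s"
  shows "x \<in> vertices K"
proof -
  have "{x} \<subseteq> s" using assms(3) by simp
  then show ?thesis
    using assms(1,2) unfolding simplicial_complex_def vertices_def by blast
qed

lemma simplicial_complex_finite_vertices:
  assumes "simplicial_complex K"
  shows "finite (vertices K)"
proof (rule finite_subset)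
  show "vertices K \<subseteq> \<Union>K" by (auto simp: vertices_def)
  show "finite (\<Union>K)" using assms by (auto simp: simplicial_complex_def)
qed

lemma vertices_mono: "K' \<subseteq> K \<Longrightarrow> vertices K' \<subseteq> vertices K"
  by (auto simp: vertices_def)

lemma edges_mono: "K' \<subseteq> K \<Longrightarrow> edges K' \<subseteq> edges K"
  by (auto simp: edges_def)

lemma link_mono: "K' \<subseteq> K \<Longrightarrow> link K' v \<subseteq> link K v"
  by (auto simp: link_def)

lemma tri_circle_card_edges:
  assumes C: "tri_circle C"
  shows "card (edges C) = card (vertices C)"
proof -
  have sc: "simplicial_complex C" using C by (simp add: tri_circle_def)
  have fE: "finite (edges C)" using sc by (simp add: simplicial_complex_def edges_def)
  have fV: "finite (vertices C)" using sc by (rule simplicial_complex_finite_vertices)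
  have edge_sub: "e \<subseteq> vertices C" if "e \<in> edges C" for e
    using that sc simplicial_complex_vertex_of_face by (auto simp: edges_def)
  have "2 * card (vertices C) = (\<Sum>u\<in>vertices C. degree C u)"
    using C by (simp add: tri_circle_def)
  also have "\<dots> = (\<Sum>u\<in>vertices C. \<Sum>e\<in>edges C. if u \<in> e then 1 else 0)"
    by (simp add: degree_def sum.If_cases fE Int_def conj_commute)
  also have "\<dots> = (\<Sum>e\<in>edges C. \<Sum>u\<in>vertices C. if u \<in> e then 1 else 0)"
    by (rule sum.swap)
  also have "\<dots> = (\<Sum>e\<in>edges C. card e)"
    using edge_sub by (intro sum.cong) (auto simp: sum.If_cases fV Int_absorb1)
  also have "\<dots> = 2 * card (edges C)"
    by (simp add: edges_def)
  finally show ?thesis by simp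
qed

lemma tri_circle_subcircle_star:
  assumes C: "tri_circle C" and C': "tri_circle C'" and sub: "C' \<subseteq> C"
    and a: "a \<in> vertices C'"
  shows "{e\<in>edges C'. a \<in> e} = {e\<in>edges C. a \<in> e}"
proof (rule card_subset_eq)
  show "finite {e\<in>edges C. a \<in> e}"
    using C by (simp add: tri_circle_def simplicial_complex_def edges_def)
  show "{e\<in>edges C'. a \<in> e} \<subseteq> {e\<in>edges C. a \<in> e}"
    using edges_mono[OF sub] by blast
  have "a \<in> vertices C" using a vertices_mono[OF sub] by blast
  then show "card {e\<in>edges C'. a \<in> e} = card {e\<in>edges C. a \<in> e}"
    using C C' a by (simp add: tri_circle_def degree_def)
qed

text \<open>Since every vertex of \<open>C'\<close> has in \<open>C'\<close> both of its \<open>C\<close>-edges, connectedness of \<open>C\<close>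
  propagates membership in \<open>C'\<close> to all vertices.\<close>

lemma tri_circle_subcircle_edges:
  assumes C: "tri_circle C" and C': "tri_circle C'" and sub: "C' \<subseteq> C"
  shows "edges C' = edges C"
proof -
  have sc': "simplicial_complex C'" using C' by (simp add: tri_circle_def)
  have star: "{e\<in>edges C. a \<in> e} \<subseteq> edges C'" if "a \<in> vertices C'" for a
    using tri_circle_subcircle_star[OF C C' sub that] by blast
  obtain w where w: "w \<in> vertices C'"
    using C' by (fastforce simp: tri_circle_def)
  have all_vertices: "u \<in> vertices C'" if u: "u \<in> vertices C" for u
  proof -
    have "w \<in> vertices C" using w vertices_mono[OF sub] by blast
    then have "(w, u) \<in> {(a, b). {a, b} \<in> edges C}\<^sup>*"
      using C u by (simp add: tri_circle_def cx_connected_def)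
    then show ?thesis
    proof (induction rule: rtrancl_induct)
      case base
      show ?case using w .
    next
      case (step a b)
      then have "{a, b} \<in> edges C'" using star by blast
      then show ?case
        by (intro simplicial_complex_vertex_of_face[OF sc', of "{a, b}"]) (auto simp: edges_def)
    qed
  qed
  have "edges C \<subseteq> edges C'"
  proof
    fix e assume e: "e \<in> edges C"
    then obtain a b where "e = {a, b}" by (auto simp: edges_def card_2_iff)
    moreover have "a \<in> vertices C" using e \<open>e = {a, b}\<close> C
      by (auto simp: edges_def tri_circle_def intro: simplicial_complex_vertex_of_face)
    ultimately show "e \<in> edges C'" using e star all_vertices by blast
  qed
  then show ?thesis using edges_mono[OF sub] by blast
qed

lemma valence_eq_card_edges_link:
  assumes sc: "simplicial_complex K"
  shows "valence K v = card (edges (link K v))"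
  unfolding valence_def
proof (rule bij_betw_same_card[of "\<lambda>t. t - {v}"], rule bij_betw_imageI)
  show "inj_on (\<lambda>t. t - {v}) {t\<in>triangles K. v \<in> t}"
    by (rule inj_onI) blast
  show "(\<lambda>t. t - {v}) ` {t\<in>triangles K. v \<in> t} = edges (link K v)"
  proof (intro equalityI subsetI)
    fix e assume "e \<in> (\<lambda>t. t - {v}) ` {t\<in>triangles K. v \<in> t}"
    then obtain t where t: "t \<in> K" "card t = 3" "v \<in> t" "e = t - {v}"
      by (auto simp: triangles_def)
    then have "card e = 2" by (simp add: card_gt_0_iff)
    moreover have "t \<noteq> {v}" using t by auto
    ultimately show "e \<in> edges (link K v)"
      using t by (auto simp: edges_def link_def)
  next
    fix e assume "e \<in> edges (link K v)"
    then have "e \<in> link K v" and e2: "card e = 2" by (auto simp: edges_def)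
    then obtain s where s: "s \<in> K" "v \<in> s" "e = s - {v}"
      unfolding link_def by blast
    have "finite s" using s(1) sc by (simp add: simplicial_complex_def)
    then have "card s = Suc (card e)" using s by (metis card_Suc_Diff1)
    then have "card s = 3" using e2 by simp
    then show "e \<in> (\<lambda>t. t - {v}) ` {t\<in>triangles K. v \<in> t}"
      using s by (auto simp: triangles_def)
  qed
qed

lemma valence_le_card_triangles:
  assumes "simplicial_complex K"
  shows "valence K v \<le> card (triangles K)"
  using assms unfolding valence_def
  by (intro card_mono) (auto simp: simplicial_complex_def triangles_def)

lemma interior_vertex_valence_le_card_vertices:
  assumes sc: "simplicial_complex K" and v: "interior_vertex K v"
  shows "valence K v + 1 \<le> card (vertices K)"
proof -
  have circ: "tri_circle (link K v)" and vK: "v \<in> vertices K"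
    using v by (auto simp: interior_vertex_def)
  have fin: "finite (vertices K)" using sc by (rule simplicial_complex_finite_vertices)
  have "vertices (link K v) \<subseteq> vertices K - {v}"
  proof
    fix w assume "w \<in> vertices (link K v)"
    then obtain s where s: "s \<in> K" "v \<in> s" "s - {v} = {w}"
      by (auto simp: vertices_def link_def)
    then have "w \<in> s" "w \<noteq> v" by auto
    then show "w \<in> vertices K - {v}"
      using simplicial_complex_vertex_of_face[OF sc s(1)] by blast
  qed
  then have "card (vertices (link K v)) \<le> card (vertices K - {v})"
    using fin by (intro card_mono) auto
  moreover have "card (vertices K - {v}) + 1 = card (vertices K)"
    using fin vK by (metis Suc_eq_plus1 card_Suc_Diff1)
  ultimately show ?thesis
    using valence_eq_card_edges_link[OF sc] tri_circle_card_edges[OF circ] by simp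
qed

lemma valence_subcomplex_interior_vertex:
  assumes sc: "simplicial_complex K" and sc': "simplicial_complex K'" and sub: "K' \<subseteq> K"
    and v: "interior_vertex K' v" and circ: "tri_circle (link K v)"
  shows "valence K' v = valence K v"
proof -
  have "edges (link K' v) = edges (link K v)"
    using v circ link_mono[OF sub]
    by (intro tri_circle_subcircle_edges) (auto simp: interior_vertex_def)
  then show ?thesis
    using valence_eq_card_edges_link[OF sc] valence_eq_card_edges_link[OF sc'] by simp
qed

theorem mainTheorem2:
  fixes T G D :: "'v set set" and Ds :: "'v set set list"
  assumes "closed_surface T"
    and "decomposition T G D Ds"
  shows "card (triangles D) \<ge> mv T \<and> card (vertices D) \<ge> mv T + 1"
proof -
  obtain v where v: "interior_vertex D v" and vm: "valence T v = mv T"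
    using assms(2) by (auto simp: decomposition_def)
  have DT: "D \<subseteq> T" and scD: "simplicial_complex D"
    using assms(2) by (auto simp: decomposition_def sub_triangulation_def tri_surface_def)
  have scT: "simplicial_complex T" and "interior_vertex T v"
    using assms(1) v vertices_mono[OF DT]
    by (auto simp: closed_surface_def tri_surface_def interior_vertex_def)
  then have "valence D v = mv T"
    using valence_subcomplex_interior_vertex[OF scT scD DT v] vm
    by (simp add: interior_vertex_def)
  then show ?thesis
    using valence_le_card_triangles[OF scD, of v] interior_vertex_valence_le_card_vertices[OF scD v]
    by simp
qed

end
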